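(* Let $\mathcal{M}$ be a circular orientable embedding of type $(k,d)$ of a connected graph $X$. If $\mathcal{M}$ is orientably-regular, then: - the vertex-face incidence graph of $\mathcal{M}$ is edge-transitive; - the $H$-digraph of $\mathcal{M}$ is vertex-transitive.
   Context: Setting. A circular embedding is a cellular embedding in which every face is bounded by a cycle. It has type $(k,d)$ if every vertex has $d$ neighbours and every face uses $k$ vertices. $\mathcal{M}$ is orientably-regular if its group of orientation-preserving automorphisms acts regularly on the arcs (ordered pairs $(u,v)$ with $\{u,v\}$ an edge). Vertex-face incidence graph. This is the bipartite graph on the vertices and faces of $\mathcal{M}$, with a vertex adjacent to a face iff it lies on it. Vertex-face transition matrix. Fix a consistent orientation of the faces, so that each edge shared by two faces receives opposite directions in them. Let $M$ be the arc-face incidence matrix and $N$ the arc-tail incidence matrix. The transition matrix is $U=(\tfrac2kMM^T-I)(\tfrac2dNN^T-I)$. $H$-digraph. The principal Hamiltonian of a unitary $V=\sum_r\alpha_rF_r$ (spectral decomposition) is $H=-i\sum_r\log(\alpha_r)F_r$, with the branch chosen so that $-\pi<-i\log(\alpha_r)\le\pi$; it satisfies $V=\exp(iH)$. The $H$-digraph of $\mathcal{M}$ is the weighted digraph on the arcs of $X$ whose weighted adjacency matrix is the principal Hamiltonian $H$ of $U^2$; there is an arc $a\to b$ iff $H_{a,b}\neq0$. *)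

theory Defs
  imports "HOL-Analysis.Analysis"
begin

text \<open>An orientable cellular embedding of a
connected simple graph is encoded (Heffter--Edmonds) by a rotation system:
for every vertex v a cyclic permutation rho v of the neighbours of v.\<close>

definition simple_graph :: "'v set \<Rightarrow> ('v \<Rightarrow> 'v \<Rightarrow> bool) \<Rightarrow> bool" where
  "simple_graph V E \<longleftrightarrow> finite V \<and> (\<forall>u v. E u v \<longrightarrow> u \<in> V \<and> v \<in> V)
     \<and> (\<forall>u v. E u v \<longrightarrow> E v u) \<and> (\<forall>v. \<not> E v v)"

definition connected_graph :: "'v set \<Rightarrow> ('v \<Rightarrow> 'v \<Rightarrow> bool) \<Rightarrow> bool" where
  "connected_graph V E \<longleftrightarrow> V \<noteq> {} \<and> (\<forall>u\<in>V. \<forall>v\<in>V. E\<^sup>*\<^sup>* u v)"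

definition nbrs :: "('v \<Rightarrow> 'v \<Rightarrow> bool) \<Rightarrow> 'v \<Rightarrow> 'v set" where
  "nbrs E v = {u. E v u}"

definition arcs :: "'v set \<Rightarrow> ('v \<Rightarrow> 'v \<Rightarrow> bool) \<Rightarrow> ('v \<times> 'v) set" where
  "arcs V E = {(u, v). u \<in> V \<and> v \<in> V \<and> E u v}"

definition rotation_system :: "'v set \<Rightarrow> ('v \<Rightarrow> 'v \<Rightarrow> bool) \<Rightarrow> ('v \<Rightarrow> 'v \<Rightarrow> 'v) \<Rightarrow> bool" where
  "rotation_system V E \<rho> \<longleftrightarrow> (\<forall>v\<in>V. bij_betw (\<rho> v) (nbrs E v) (nbrs E v)
     \<and> (\<forall>u\<in>nbrs E v. \<forall>w\<in>nbrs E v. \<exists>n. (\<rho> v ^^ n) u = w))"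

text \<open>Face tracing: after traversing the arc (u,v), the next arc of the face is
(v, rho v u).  Faces are the orbits of this permutation on arcs; each face comes
with the orientation given by the traversal, so that an edge shared by two faces
gets opposite directions in them (consistent orientation).\<close>
definition face_perm :: "('v \<Rightarrow> 'v \<Rightarrow> 'v) \<Rightarrow> 'v \<times> 'v \<Rightarrow> 'v \<times> 'v" where
  "face_perm \<rho> a = (snd a, \<rho> (snd a) (fst a))"

definition face_orbit :: "('v \<Rightarrow> 'v \<Rightarrow> 'v) \<Rightarrow> 'v \<times> 'v \<Rightarrow> ('v \<times> 'v) set" where
  "face_orbit \<rho> a = range (\<lambda>n. (face_perm \<rho> ^^ n) a)"

definition faces :: "'v set \<Rightarrow> ('v \<Rightarrow> 'v \<Rightarrow> bool) \<Rightarrow> ('v \<Rightarrow> 'v \<Rightarrow> 'v) \<Rightarrow> ('v \<times> 'v) set set" where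
  "faces V E \<rho> = face_orbit \<rho> ` arcs V E"

definition face_vertices :: "('v \<times> 'v) set \<Rightarrow> 'v set" where
  "face_vertices F = fst ` F"

text \<open>Circular: every face is bounded by a cycle, i.e. the boundary walk has length
at least 3 and visits no vertex twice.\<close>
definition circular :: "'v set \<Rightarrow> ('v \<Rightarrow> 'v \<Rightarrow> bool) \<Rightarrow> ('v \<Rightarrow> 'v \<Rightarrow> 'v) \<Rightarrow> bool" where
  "circular V E \<rho> \<longleftrightarrow> (\<forall>F\<in>faces V E \<rho>. inj_on fst F \<and> card F \<ge> 3)"

definition has_type :: "'v set \<Rightarrow> ('v \<Rightarrow> 'v \<Rightarrow> bool) \<Rightarrow> ('v \<Rightarrow> 'v \<Rightarrow> 'v) \<Rightarrow> nat \<Rightarrow> nat \<Rightarrow> bool" where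
  "has_type V E \<rho> k d \<longleftrightarrow> (\<forall>v\<in>V. card (nbrs E v) = d)
     \<and> (\<forall>F\<in>faces V E \<rho>. card (face_vertices F) = k)"

definition or_aut :: "'v set \<Rightarrow> ('v \<Rightarrow> 'v \<Rightarrow> bool) \<Rightarrow> ('v \<Rightarrow> 'v \<Rightarrow> 'v) \<Rightarrow> ('v \<Rightarrow> 'v) \<Rightarrow> bool" where
  "or_aut V E \<rho> g \<longleftrightarrow> bij_betw g V V \<and> (\<forall>u\<in>V. \<forall>v\<in>V. E u v \<longleftrightarrow> E (g u) (g v))
     \<and> (\<forall>v\<in>V. \<forall>u. E v u \<longrightarrow> g (\<rho> v u) = \<rho> (g v) (g u))"

text \<open>Orientably-regular: the orientation-preserving automorphism group acts
regularly (transitively and freely) on the arcs.\<close>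
definition orientably_regular :: "'v set \<Rightarrow> ('v \<Rightarrow> 'v \<Rightarrow> bool) \<Rightarrow> ('v \<Rightarrow> 'v \<Rightarrow> 'v) \<Rightarrow> bool" where
  "orientably_regular V E \<rho> \<longleftrightarrow>
     (\<forall>a\<in>arcs V E. \<forall>b\<in>arcs V E. \<exists>g. or_aut V E \<rho> g \<and> (g (fst a), g (snd a)) = b)
   \<and> (\<forall>a\<in>arcs V E. \<forall>g. or_aut V E \<rho> g \<and> (g (fst a), g (snd a)) = a \<longrightarrow> (\<forall>x\<in>V. g x = x))"

definition graph_aut :: "'w set \<Rightarrow> ('w \<Rightarrow> 'w \<Rightarrow> bool) \<Rightarrow> ('w \<Rightarrow> 'w) \<Rightarrow> bool" where
  "graph_aut W R \<sigma> \<longleftrightarrow> bij_betw \<sigma> W W \<and> (\<forall>x\<in>W. \<forall>y\<in>W. R x y \<longleftrightarrow> R (\<sigma> x) (\<sigma> y))"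

definition edge_transitive :: "'w set \<Rightarrow> ('w \<Rightarrow> 'w \<Rightarrow> bool) \<Rightarrow> bool" where
  "edge_transitive W R \<longleftrightarrow> (\<forall>x\<in>W. \<forall>y\<in>W. \<forall>x'\<in>W. \<forall>y'\<in>W. R x y \<and> R x' y' \<longrightarrow>
      (\<exists>\<sigma>. graph_aut W R \<sigma> \<and> {\<sigma> x, \<sigma> y} = {x', y'}))"

definition vf_vertices :: "'v set \<Rightarrow> ('v \<Rightarrow> 'v \<Rightarrow> bool) \<Rightarrow> ('v \<Rightarrow> 'v \<Rightarrow> 'v) \<Rightarrow> ('v + ('v \<times> 'v) set) set" where
  "vf_vertices V E \<rho> = Inl ` V \<union> Inr ` faces V E \<rho>"

fun vf_adj :: "('v + ('v \<times> 'v) set) \<Rightarrow> ('v + ('v \<times> 'v) set) \<Rightarrow> bool" where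
  "vf_adj (Inl v) (Inr F) = (v \<in> face_vertices F)"
| "vf_adj (Inr F) (Inl v) = (v \<in> face_vertices F)"
| "vf_adj _ _ = False"

type_synonym 'a cmat = "'a \<Rightarrow> 'a \<Rightarrow> complex"

definition mmult :: "'a set \<Rightarrow> 'a cmat \<Rightarrow> 'a cmat \<Rightarrow> 'a cmat" where
  "mmult A X Y = (\<lambda>a b. \<Sum>c\<in>A. X a c * Y c b)"

definition mid :: "'a cmat" where
  "mid = (\<lambda>a b. if a = b then 1 else 0)"

definition mat_eq :: "'a set \<Rightarrow> 'a cmat \<Rightarrow> 'a cmat \<Rightarrow> bool" where
  "mat_eq A X Y \<longleftrightarrow> (\<forall>a\<in>A. \<forall>b\<in>A. X a b = Y a b)"

text \<open>Spectral decomposition V = sum over r of alpha_r F_r: the alpha_r are distinct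
(a finite set S), the F_r are nonzero orthogonal projections (Hermitian idempotents),
mutually orthogonal, summing to the identity.\<close>
definition spectral_decomp :: "'a set \<Rightarrow> 'a cmat \<Rightarrow> complex set \<Rightarrow> (complex \<Rightarrow> 'a cmat) \<Rightarrow> bool" where
  "spectral_decomp A V S F \<longleftrightarrow> finite S
     \<and> (\<forall>\<alpha>\<in>S. (\<forall>a\<in>A. \<forall>b\<in>A. F \<alpha> a b = cnj (F \<alpha> b a))
             \<and> mat_eq A (mmult A (F \<alpha>) (F \<alpha>)) (F \<alpha>)
             \<and> (\<exists>a\<in>A. \<exists>b\<in>A. F \<alpha> a b \<noteq> 0))
     \<and> (\<forall>\<alpha>\<in>S. \<forall>\<beta>\<in>S. \<alpha> \<noteq> \<beta> \<longrightarrow> mat_eq A (mmult A (F \<alpha>) (F \<beta>)) (\<lambda>_ _. 0))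
     \<and> mat_eq A (\<lambda>a b. \<Sum>\<alpha>\<in>S. F \<alpha> a b) mid
     \<and> mat_eq A V (\<lambda>a b. \<Sum>\<alpha>\<in>S. \<alpha> * F \<alpha> a b)"

text \<open>Principal Hamiltonian H = -i sum_r log(alpha_r) F_r, with the principal
branch: Isabelle's Ln has imaginary part in (-pi, pi], so -i Ln alpha has real part
in (-pi, pi] (and equals Arg alpha for |alpha| = 1).\<close>
definition principal_hamiltonian :: "'a set \<Rightarrow> 'a cmat \<Rightarrow> 'a cmat \<Rightarrow> bool" where
  "principal_hamiltonian A V H \<longleftrightarrow> (\<exists>S F. spectral_decomp A V S F
      \<and> mat_eq A H (\<lambda>a b. \<Sum>\<alpha>\<in>S. (- \<i> * Ln \<alpha>) * F \<alpha> a b))"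

text \<open>Vertex-transitivity of a weighted digraph on carrier A with weighted adjacency
matrix H (arc a to b iff H a b nonzero): automorphisms are permutations of A
preserving all weights.\<close>
definition weighted_digraph_aut :: "'a set \<Rightarrow> 'a cmat \<Rightarrow> ('a \<Rightarrow> 'a) \<Rightarrow> bool" where
  "weighted_digraph_aut A H \<sigma> \<longleftrightarrow> bij_betw \<sigma> A A \<and> (\<forall>a\<in>A. \<forall>b\<in>A. H (\<sigma> a) (\<sigma> b) = H a b)"

definition weighted_vertex_transitive :: "'a set \<Rightarrow> 'a cmat \<Rightarrow> bool" where
  "weighted_vertex_transitive A H \<longleftrightarrow>
     (\<forall>a\<in>A. \<forall>b\<in>A. \<exists>\<sigma>. weighted_digraph_aut A H \<sigma> \<and> \<sigma> a = b)"

definition arc_face_inc :: "('v \<times> 'v) \<Rightarrow> ('v \<times> 'v) set \<Rightarrow> real" where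
  "arc_face_inc a F = (if a \<in> F then 1 else 0)"

definition arc_tail_inc :: "('v \<times> 'v) \<Rightarrow> 'v \<Rightarrow> real" where
  "arc_tail_inc a v = (if fst a = v then 1 else 0)"

definition transition_matrix ::
  "'v set \<Rightarrow> ('v \<Rightarrow> 'v \<Rightarrow> bool) \<Rightarrow> ('v \<Rightarrow> 'v \<Rightarrow> 'v) \<Rightarrow> nat \<Rightarrow> nat \<Rightarrow> ('v \<times> 'v) cmat" where
  "transition_matrix V E \<rho> k d =
     mmult (arcs V E)
       (\<lambda>a b. complex_of_real (2 / real k * (\<Sum>F\<in>faces V E \<rho>. arc_face_inc a F * arc_face_inc b F))
              - mid a b)
       (\<lambda>a b. complex_of_real (2 / real d * (\<Sum>v\<in>V. arc_tail_inc a v * arc_tail_inc b v))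
              - mid a b)"

end

theory Submission
  imports Defs
begin

text \<open>
  An orientation-preserving automorphism \<open>g\<close> acts on arcs by \<open>(u, v) \<mapsto> (g u, g v)\<close>; it
  commutes with face tracing, so it permutes the faces and preserves vertex-face incidence.
  Every incidence \<open>v \<in> F\<close> is witnessed by an arc of \<open>F\<close> with tail \<open>v\<close>, and a face is the
  face-tracing orbit of any of its arcs, so transitivity on arcs gives transitivity on
  incidences, i.e. on the edges of the incidence graph.
  The same arc permutation fixes \<open>M M\<^sup>T\<close>, \<open>N N\<^sup>T\<close> and hence \<open>U\<close> and \<open>U\<^sup>2\<close>. The spectral
  projections of \<open>U\<^sup>2\<close> are unique, so the permutation fixes each of them and therefore the
  principal Hamiltonian; this makes the \<open>H\<close>-digraph vertex-transitive.
\<close>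

lemma mmult_assoc:
  assumes "finite A"
  shows "mmult A (mmult A X Y) Z a b = mmult A X (mmult A Y Z) a b"
  unfolding mmult_def
  by (simp add: sum_distrib_left sum_distrib_right mult.assoc) (rule sum.swap)

lemma mat_eq_refl: "mat_eq A X X"
  unfolding mat_eq_def by simp

lemma mmult_cong:
  assumes "mat_eq A X X'" "mat_eq A Y Y'" "a \<in> A" "b \<in> A"
  shows "mmult A X Y a b = mmult A X' Y' a b"
  using assms unfolding mmult_def mat_eq_def by (auto intro!: sum.cong)

lemma mmult_mid_right:
  assumes "finite A" "a \<in> A" "b \<in> A"
  shows "mmult A X mid a b = X a b"
  using assms unfolding mmult_def mid_def by (simp add: if_distrib cong: if_cong)

lemma mmult_mid_left:
  assumes "finite A" "a \<in> A" "b \<in> A"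
  shows "mmult A mid X a b = X a b"
  using assms unfolding mmult_def mid_def by (simp add: if_distrib[of "\<lambda>x. x * _"] cong: if_cong)

lemma mmult_scale_left: "mmult A (\<lambda>a b. c * X a b) Y a b = c * mmult A X Y a b"
  unfolding mmult_def by (simp add: sum_distrib_left mult.assoc)

lemma mmult_scale_right: "mmult A X (\<lambda>a b. c * Y a b) a b = c * mmult A X Y a b"
  unfolding mmult_def by (simp add: sum_distrib_left mult.left_commute)

lemma mmult_sum_left:
  "mmult A (\<lambda>a b. \<Sum>\<alpha>\<in>S. X \<alpha> a b) Y a b = (\<Sum>\<alpha>\<in>S. mmult A (X \<alpha>) Y a b)"
  unfolding mmult_def by (simp add: sum_distrib_right) (rule sum.swap)

lemma mmult_sum_right:
  "mmult A X (\<lambda>a b. \<Sum>\<alpha>\<in>S. Y \<alpha> a b) a b = (\<Sum>\<alpha>\<in>S. mmult A X (Y \<alpha>) a b)"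
  unfolding mmult_def by (simp add: sum_distrib_left) (rule sum.swap)

definition permute_mat :: "('a \<Rightarrow> 'a) \<Rightarrow> 'a cmat \<Rightarrow> 'a cmat" where
  "permute_mat \<sigma> X = (\<lambda>a b. X (\<sigma> a) (\<sigma> b))"

lemma mmult_permute_mat:
  assumes "bij_betw \<sigma> A A"
  shows "mmult A (permute_mat \<sigma> X) (permute_mat \<sigma> Y) a b = mmult A X Y (\<sigma> a) (\<sigma> b)"
  unfolding mmult_def permute_mat_def
  using sum.reindex_bij_betw[OF assms, of "\<lambda>c. X (\<sigma> a) c * Y c (\<sigma> b)"] by simp

lemma mid_permute:
  assumes "inj_on \<sigma> A" "a \<in> A" "b \<in> A"
  shows "mid (\<sigma> a) (\<sigma> b) = mid a b"
  using assms unfolding mid_def inj_on_def by auto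

lemma permute_mat_nonzero:
  assumes \<sigma>: "bij_betw \<sigma> A A" and ab: "a \<in> A" "b \<in> A" "X a b \<noteq> 0"
  shows "\<exists>a'\<in>A. \<exists>b'\<in>A. permute_mat \<sigma> X a' b' \<noteq> 0"
proof -
  let ?a = "inv_into A \<sigma> a" and ?b = "inv_into A \<sigma> b"
  have "?a \<in> A" "?b \<in> A"
    using bij_betw_apply[OF bij_betw_inv_into[OF \<sigma>]] ab by simp_all
  moreover have "permute_mat \<sigma> X ?a ?b = X a b"
    unfolding permute_mat_def bij_betw_inv_into_right[OF \<sigma> ab(1)] bij_betw_inv_into_right[OF \<sigma> ab(2)] ..
  ultimately show ?thesis
    using ab(3) by metis
qed

lemma mat_eq_permute_mmult:
  assumes \<sigma>: "bij_betw \<sigma> A A"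
    and "mat_eq A (permute_mat \<sigma> X) X" "mat_eq A (permute_mat \<sigma> Y) Y"
  shows "mat_eq A (permute_mat \<sigma> (mmult A X Y)) (mmult A X Y)"
  unfolding mat_eq_def
proof (intro ballI)
  fix a b assume "a \<in> A" "b \<in> A"
  have "permute_mat \<sigma> (mmult A X Y) a b = mmult A (permute_mat \<sigma> X) (permute_mat \<sigma> Y) a b"
    using mmult_permute_mat[OF \<sigma>, of X Y a b] unfolding permute_mat_def by simp
  also have "\<dots> = mmult A X Y a b"
    by (rule mmult_cong) fact+
  finally show "permute_mat \<sigma> (mmult A X Y) a b = mmult A X Y a b" .
qed

section \<open>Spectral decompositions and the principal Hamiltonian\<close>

lemma spectral_decompD:
  assumes "spectral_decomp A V S F"
  shows "finite S"
   and "\<alpha> \<in> S \<Longrightarrow> a \<in> A \<Longrightarrow> b \<in> A \<Longrightarrow> F \<alpha> a b = cnj (F \<alpha> b a)"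
   and "\<alpha> \<in> S \<Longrightarrow> a \<in> A \<Longrightarrow> b \<in> A \<Longrightarrow> mmult A (F \<alpha>) (F \<alpha>) a b = F \<alpha> a b"
   and "\<alpha> \<in> S \<Longrightarrow> \<exists>a\<in>A. \<exists>b\<in>A. F \<alpha> a b \<noteq> 0"
   and "\<alpha> \<in> S \<Longrightarrow> \<beta> \<in> S \<Longrightarrow> \<alpha> \<noteq> \<beta> \<Longrightarrow> a \<in> A \<Longrightarrow> b \<in> A \<Longrightarrow> mmult A (F \<alpha>) (F \<beta>) a b = 0"
   and "a \<in> A \<Longrightarrow> b \<in> A \<Longrightarrow> (\<Sum>\<alpha>\<in>S. F \<alpha> a b) = mid a b"
   and "a \<in> A \<Longrightarrow> b \<in> A \<Longrightarrow> V a b = (\<Sum>\<alpha>\<in>S. \<alpha> * F \<alpha> a b)"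
  using assms unfolding spectral_decomp_def mat_eq_def by blast+

lemma spectral_decompI:
  assumes "finite S"
   and "\<And>\<alpha> a b. \<alpha> \<in> S \<Longrightarrow> a \<in> A \<Longrightarrow> b \<in> A \<Longrightarrow> F \<alpha> a b = cnj (F \<alpha> b a)"
   and "\<And>\<alpha> a b. \<alpha> \<in> S \<Longrightarrow> a \<in> A \<Longrightarrow> b \<in> A \<Longrightarrow> mmult A (F \<alpha>) (F \<alpha>) a b = F \<alpha> a b"
   and "\<And>\<alpha>. \<alpha> \<in> S \<Longrightarrow> \<exists>a\<in>A. \<exists>b\<in>A. F \<alpha> a b \<noteq> 0"
   and "\<And>\<alpha> \<beta> a b. \<alpha> \<in> S \<Longrightarrow> \<beta> \<in> S \<Longrightarrow> \<alpha> \<noteq> \<beta> \<Longrightarrow> a \<in> A \<Longrightarrow> b \<in> A \<Longrightarrow> mmult A (F \<alpha>) (F \<beta>) a b = 0"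
   and "\<And>a b. a \<in> A \<Longrightarrow> b \<in> A \<Longrightarrow> (\<Sum>\<alpha>\<in>S. F \<alpha> a b) = mid a b"
   and "\<And>a b. a \<in> A \<Longrightarrow> b \<in> A \<Longrightarrow> V a b = (\<Sum>\<alpha>\<in>S. \<alpha> * F \<alpha> a b)"
  shows "spectral_decomp A V S F"
  using assms unfolding spectral_decomp_def mat_eq_def by blast

lemma spectral_decomp_permute:
  assumes sd: "spectral_decomp A V S F" and \<sigma>: "bij_betw \<sigma> A A"
    and V: "mat_eq A (permute_mat \<sigma> V) V"
  shows "spectral_decomp A V S (\<lambda>\<alpha>. permute_mat \<sigma> (F \<alpha>))"
proof -
  note sdD = spectral_decompD[OF sd]
  have mem: "\<sigma> a \<in> A" if "a \<in> A" for a
    using \<sigma> that by (rule bij_betw_apply)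
  show ?thesis
  proof (rule spectral_decompI)
    fix \<alpha> assume "\<alpha> \<in> S"
    then show "\<exists>a\<in>A. \<exists>b\<in>A. permute_mat \<sigma> (F \<alpha>) a b \<noteq> 0"
      using permute_mat_nonzero[OF \<sigma>] sdD(4) by blast
  next
    fix \<alpha> a b assume "\<alpha> \<in> S" "a \<in> A" "b \<in> A"
    then show "permute_mat \<sigma> (F \<alpha>) a b = cnj (permute_mat \<sigma> (F \<alpha>) b a)"
      unfolding permute_mat_def by (intro sdD(2) mem)
  next
    fix \<alpha> a b assume "\<alpha> \<in> S" "a \<in> A" "b \<in> A"
    then show "mmult A (permute_mat \<sigma> (F \<alpha>)) (permute_mat \<sigma> (F \<alpha>)) a b = permute_mat \<sigma> (F \<alpha>) a b"
      unfolding mmult_permute_mat[OF \<sigma>] unfolding permute_mat_def by (intro sdD(3) mem)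
  next
    fix \<alpha> \<beta> a b assume "\<alpha> \<in> S" "\<beta> \<in> S" "\<alpha> \<noteq> \<beta>" "a \<in> A" "b \<in> A"
    then show "mmult A (permute_mat \<sigma> (F \<alpha>)) (permute_mat \<sigma> (F \<beta>)) a b = 0"
      unfolding mmult_permute_mat[OF \<sigma>] by (intro sdD(5) mem)
  next
    fix a b assume ab: "a \<in> A" "b \<in> A"
    show "(\<Sum>\<alpha>\<in>S. permute_mat \<sigma> (F \<alpha>) a b) = mid a b"
      unfolding permute_mat_def sdD(6)[OF mem mem, OF ab]
      by (rule mid_permute[OF bij_betw_imp_inj_on[OF \<sigma>] ab])
    have "V a b = V (\<sigma> a) (\<sigma> b)"
      using V ab unfolding mat_eq_def permute_mat_def by simp
    also have "\<dots> = (\<Sum>\<alpha>\<in>S. \<alpha> * permute_mat \<sigma> (F \<alpha>) a b)"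
      unfolding permute_mat_def by (rule sdD(7)[OF mem mem, OF ab])
    finally show "V a b = (\<Sum>\<alpha>\<in>S. \<alpha> * permute_mat \<sigma> (F \<alpha>) a b)" .
  qed (fact sdD(1))
qed

lemma spectral_projection_eigen:
  assumes sd: "spectral_decomp A V S F" and "\<beta> \<in> S" "a \<in> A" "b \<in> A"
  shows "mmult A V (F \<beta>) a b = \<beta> * F \<beta> a b" "mmult A (F \<beta>) V a b = \<beta> * F \<beta> a b"
proof -
  note sdD = spectral_decompD[OF sd]
  have V: "mat_eq A V (\<lambda>a b. \<Sum>\<alpha>\<in>S. \<alpha> * F \<alpha> a b)"
    unfolding mat_eq_def using sdD(7) by blast
  have "mmult A V (F \<beta>) a b = (\<Sum>\<alpha>\<in>S. \<alpha> * mmult A (F \<alpha>) (F \<beta>) a b)"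
    unfolding mmult_cong[OF V mat_eq_refl assms(3,4)] mmult_sum_left mmult_scale_left ..
  also have "\<dots> = (\<Sum>\<alpha>\<in>S. if \<alpha> = \<beta> then \<beta> * F \<beta> a b else 0)"
    by (rule sum.cong) (use assms sdD(3,5) in auto)
  finally show "mmult A V (F \<beta>) a b = \<beta> * F \<beta> a b"
    using sdD(1) \<open>\<beta> \<in> S\<close> by simp
  have "mmult A (F \<beta>) V a b = (\<Sum>\<alpha>\<in>S. \<alpha> * mmult A (F \<beta>) (F \<alpha>) a b)"
    unfolding mmult_cong[OF mat_eq_refl V assms(3,4)] mmult_sum_right mmult_scale_right ..
  also have "\<dots> = (\<Sum>\<alpha>\<in>S. if \<alpha> = \<beta> then \<beta> * F \<beta> a b else 0)"
    by (rule sum.cong) (use assms sdD(3,5) in auto)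
  finally show "mmult A (F \<beta>) V a b = \<beta> * F \<beta> a b"
    using sdD(1) \<open>\<beta> \<in> S\<close> by simp
qed

lemma spectral_projections_orthogonal:
  assumes F: "spectral_decomp A V S F" and G: "spectral_decomp A V S G" and A: "finite A"
    and "\<alpha> \<in> S" "\<beta> \<in> S" "\<alpha> \<noteq> \<beta>" "a \<in> A" "b \<in> A"
  shows "mmult A (F \<alpha>) (G \<beta>) a b = 0"
proof -
  have "\<alpha> * mmult A (F \<alpha>) (G \<beta>) a b = mmult A (mmult A (F \<alpha>) V) (G \<beta>) a b"
    unfolding mmult_scale_left[symmetric]
    by (rule mmult_cong) (use spectral_projection_eigen(2)[OF F \<open>\<alpha> \<in> S\<close>] assms in \<open>auto simp: mat_eq_def\<close>)
  also have "\<dots> = mmult A (F \<alpha>) (mmult A V (G \<beta>)) a b"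
    by (rule mmult_assoc[OF A])
  also have "\<dots> = \<beta> * mmult A (F \<alpha>) (G \<beta>) a b"
    unfolding mmult_scale_right[symmetric]
    by (rule mmult_cong) (use spectral_projection_eigen(1)[OF G \<open>\<beta> \<in> S\<close>] assms in \<open>auto simp: mat_eq_def\<close>)
  finally show ?thesis
    using \<open>\<alpha> \<noteq> \<beta>\<close> by (metis mult_cancel_right)
qed

lemma spectral_decomp_unique:
  assumes F: "spectral_decomp A V S F" and G: "spectral_decomp A V S G" and A: "finite A"
    and \<alpha>: "\<alpha> \<in> S" and ab: "a \<in> A" "b \<in> A"
  shows "F \<alpha> a b = G \<alpha> a b"
proof -
  have S: "finite S" by (rule spectral_decompD(1)[OF F])
  have IF: "mat_eq A mid (\<lambda>a b. \<Sum>\<beta>\<in>S. F \<beta> a b)" and IG: "mat_eq A mid (\<lambda>a b. \<Sum>\<beta>\<in>S. G \<beta> a b)"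
    unfolding mat_eq_def using spectral_decompD(6)[OF F] spectral_decompD(6)[OF G] by simp_all
  have "F \<alpha> a b = mmult A (F \<alpha>) mid a b"
    using mmult_mid_right[OF A ab] by simp
  also have "\<dots> = (\<Sum>\<beta>\<in>S. mmult A (F \<alpha>) (G \<beta>) a b)"
    unfolding mmult_cong[OF mat_eq_refl IG ab] mmult_sum_right ..
  also have "\<dots> = mmult A (F \<alpha>) (G \<alpha>) a b"
    using spectral_projections_orthogonal[OF F G A \<alpha> _ _ ab] S \<alpha> by (auto simp: sum.remove intro!: sum.neutral)
  also have "\<dots> = (\<Sum>\<beta>\<in>S. mmult A (F \<beta>) (G \<alpha>) a b)"
    using spectral_projections_orthogonal[OF F G A _ \<alpha> _ ab] S \<alpha> by (auto simp: sum.remove intro!: sum.neutral)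
  also have "\<dots> = mmult A mid (G \<alpha>) a b"
    unfolding mmult_cong[OF IF mat_eq_refl ab] mmult_sum_left ..
  also have "\<dots> = G \<alpha> a b"
    using mmult_mid_left[OF A ab] by simp
  finally show ?thesis .
qed

lemma principal_hamiltonian_aut:
  assumes H: "principal_hamiltonian A V H" and A: "finite A" and \<sigma>: "bij_betw \<sigma> A A"
    and V: "mat_eq A (permute_mat \<sigma> V) V"
  shows "weighted_digraph_aut A H \<sigma>"
  unfolding weighted_digraph_aut_def
proof (intro conjI \<sigma> ballI)
  obtain S F where sd: "spectral_decomp A V S F"
    and HF: "mat_eq A H (\<lambda>a b. \<Sum>\<alpha>\<in>S. (- \<i> * Ln \<alpha>) * F \<alpha> a b)"
    using H unfolding principal_hamiltonian_def by blast
  note sd' = spectral_decomp_permute[OF sd \<sigma> V]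
  fix a b assume ab: "a \<in> A" "b \<in> A"
  have "H (\<sigma> a) (\<sigma> b) = (\<Sum>\<alpha>\<in>S. (- \<i> * Ln \<alpha>) * permute_mat \<sigma> (F \<alpha>) a b)"
    using HF bij_betw_apply[OF \<sigma>] ab unfolding mat_eq_def permute_mat_def by simp
  also have "\<dots> = (\<Sum>\<alpha>\<in>S. (- \<i> * Ln \<alpha>) * F \<alpha> a b)"
    using spectral_decomp_unique[OF sd' sd A _ ab] by simp
  also have "\<dots> = H a b"
    using HF ab unfolding mat_eq_def by simp
  finally show "H (\<sigma> a) (\<sigma> b) = H a b" .
qed

section \<open>Faces of a rotation system\<close>

lemma face_orbit_funpow:
  "face_orbit \<rho> ((face_perm \<rho> ^^ n) a) = (face_perm \<rho> ^^ n) ` face_orbit \<rho> a"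
proof -
  have "(face_perm \<rho> ^^ m) ((face_perm \<rho> ^^ n) a) = (face_perm \<rho> ^^ n) ((face_perm \<rho> ^^ m) a)" for m
    by (metis add.commute comp_apply funpow_add)
  then show ?thesis
    unfolding face_orbit_def by (auto simp: image_image)
qed

lemma face_vertices_map_prod: "face_vertices (map_prod g g ` F) = g ` face_vertices F"
  unfolding face_vertices_def by force

locale embedded_graph =
  fixes V :: "'v set" and E :: "'v \<Rightarrow> 'v \<Rightarrow> bool" and \<rho> :: "'v \<Rightarrow> 'v \<Rightarrow> 'v"
  assumes simple: "simple_graph V E" and rotation: "rotation_system V E \<rho>"
begin

lemma finite_vertices: "finite V"
  using simple unfolding simple_graph_def by blast

lemma adj_vertices: "E u v \<Longrightarrow> u \<in> V \<and> v \<in> V"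
  using simple unfolding simple_graph_def by blast

lemma adj_sym: "E u v \<Longrightarrow> E v u"
  using simple unfolding simple_graph_def by blast

lemma mem_arcs_iff: "a \<in> arcs V E \<longleftrightarrow> E (fst a) (snd a)"
  using adj_vertices by (cases a) (auto simp: arcs_def)

lemma arc_vertices: "a \<in> arcs V E \<Longrightarrow> fst a \<in> V \<and> snd a \<in> V"
  using adj_vertices mem_arcs_iff by blast

lemma finite_arcs: "finite (arcs V E)"
proof -
  have "arcs V E \<subseteq> V \<times> V"
    by (auto simp: arcs_def)
  then show ?thesis
    using finite_vertices finite_subset by blast
qed

lemma rotation_adj: "v \<in> V \<Longrightarrow> E v u \<Longrightarrow> E v (\<rho> v u)"
  using rotation unfolding rotation_system_def bij_betw_def nbrs_def by blast

lemma face_perm_arc: "a \<in> arcs V E \<Longrightarrow> face_perm \<rho> a \<in> arcs V E"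
  by (simp add: mem_arcs_iff face_perm_def rotation_adj adj_sym arc_vertices)

lemma funpow_face_perm_arc: "a \<in> arcs V E \<Longrightarrow> (face_perm \<rho> ^^ n) a \<in> arcs V E"
  by (induction n) (auto intro: face_perm_arc)

lemma inj_on_face_perm: "inj_on (face_perm \<rho>) (arcs V E)"
proof (rule inj_onI)
  fix a b assume a: "a \<in> arcs V E" and b: "b \<in> arcs V E" and eq: "face_perm \<rho> a = face_perm \<rho> b"
  then have v: "snd a = snd b" and "\<rho> (snd a) (fst a) = \<rho> (snd a) (fst b)"
    by (auto simp: face_perm_def)
  moreover have "inj_on (\<rho> (snd a)) (nbrs E (snd a))"
    using rotation arc_vertices[OF a] unfolding rotation_system_def bij_betw_def by blast
  moreover have "fst a \<in> nbrs E (snd a)" "fst b \<in> nbrs E (snd a)"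
    using a b v adj_sym unfolding mem_arcs_iff nbrs_def by auto
  ultimately show "a = b"
    by (metis inj_onD prod_eq_iff)
qed

lemma face_orbit_subset_arcs: "a \<in> arcs V E \<Longrightarrow> face_orbit \<rho> a \<subseteq> arcs V E"
  unfolding face_orbit_def using funpow_face_perm_arc by blast

lemma face_perm_image_orbit:
  assumes a: "a \<in> arcs V E"
  shows "face_perm \<rho> ` face_orbit \<rho> a = face_orbit \<rho> a"
proof (rule endo_inj_surj)
  show "finite (face_orbit \<rho> a)"
    using face_orbit_subset_arcs[OF a] finite_arcs by (rule finite_subset)
  show "face_perm \<rho> ` face_orbit \<rho> a \<subseteq> face_orbit \<rho> a"
    unfolding face_orbit_def by (auto simp flip: funpow.simps(2) comp_apply[of "face_perm \<rho>"])
  show "inj_on (face_perm \<rho>) (face_orbit \<rho> a)"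
    using inj_on_face_perm face_orbit_subset_arcs[OF a] by (rule inj_on_subset)
qed

lemma face_orbit_eq:
  assumes a: "a \<in> arcs V E" and b: "b \<in> face_orbit \<rho> a"
  shows "face_orbit \<rho> b = face_orbit \<rho> a"
proof -
  obtain n where n: "b = (face_perm \<rho> ^^ n) a"
    using b unfolding face_orbit_def by blast
  have "(face_perm \<rho> ^^ n) ` face_orbit \<rho> a = face_orbit \<rho> a"
    by (induction n) (simp, simp only: funpow_Suc_right image_comp[symmetric] face_perm_image_orbit[OF a])
  then show ?thesis
    unfolding n face_orbit_funpow .
qed

lemma faces_subset_arcs: "F \<in> faces V E \<rho> \<Longrightarrow> F \<subseteq> arcs V E"
  unfolding faces_def using face_orbit_subset_arcs by blast

lemma finite_faces: "finite (faces V E \<rho>)"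
  unfolding faces_def using finite_arcs by simp

lemma face_eq_face_orbit:
  assumes F: "F \<in> faces V E \<rho>" and a: "a \<in> F"
  shows "F = face_orbit \<rho> a"
proof -
  obtain a0 where "a0 \<in> arcs V E" "F = face_orbit \<rho> a0"
    using F unfolding faces_def by blast
  then show ?thesis
    using face_orbit_eq a by simp
qed

lemma face_vertices_subset: "F \<in> faces V E \<rho> \<Longrightarrow> face_vertices F \<subseteq> V"
  using faces_subset_arcs arc_vertices unfolding face_vertices_def by blast

context
  fixes g assumes aut: "or_aut V E \<rho> g"
begin

lemma or_aut_inj_on: "inj_on g V"
  using aut unfolding or_aut_def bij_betw_def by blast

lemma or_aut_adj: "u \<in> V \<Longrightarrow> v \<in> V \<Longrightarrow> E (g u) (g v) \<longleftrightarrow> E u v"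
  using aut unfolding or_aut_def by blast

lemma or_aut_rotation: "v \<in> V \<Longrightarrow> E v u \<Longrightarrow> g (\<rho> v u) = \<rho> (g v) (g u)"
  using aut unfolding or_aut_def by blast

lemma map_prod_arc: "a \<in> arcs V E \<Longrightarrow> map_prod g g a \<in> arcs V E"
  using arc_vertices or_aut_adj unfolding mem_arcs_iff by (simp add: map_prod_def split_beta)

lemma bij_betw_map_prod_arcs: "bij_betw (map_prod g g) (arcs V E) (arcs V E)"
proof -
  have inj: "inj_on (map_prod g g) (arcs V E)"
    using or_aut_inj_on arc_vertices unfolding inj_on_def by (auto simp: prod_eq_iff)
  have "map_prod g g ` arcs V E = arcs V E"
    by (rule endo_inj_surj[OF finite_arcs image_subsetI[OF map_prod_arc] inj])
  with inj show ?thesis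
    unfolding bij_betw_def ..
qed

lemma face_perm_map_prod:
  assumes "a \<in> arcs V E"
  shows "face_perm \<rho> (map_prod g g a) = map_prod g g (face_perm \<rho> a)"
proof -
  have "snd a \<in> V" "E (snd a) (fst a)"
    using assms arc_vertices adj_sym unfolding mem_arcs_iff by blast+
  then show ?thesis
    by (simp add: face_perm_def map_prod_def split_beta or_aut_rotation)
qed

lemma face_orbit_map_prod:
  assumes "a \<in> arcs V E"
  shows "map_prod g g ` face_orbit \<rho> a = face_orbit \<rho> (map_prod g g a)"
proof -
  have "(face_perm \<rho> ^^ n) (map_prod g g a) = map_prod g g ((face_perm \<rho> ^^ n) a)" for n
    using assms by (induction n) (auto simp: face_perm_map_prod funpow_face_perm_arc)
  then show ?thesis
    unfolding face_orbit_def by (auto simp: image_image)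
qed

lemma bij_betw_image_faces: "bij_betw ((`) (map_prod g g)) (faces V E \<rho>) (faces V E \<rho>)"
proof -
  have inj: "inj_on ((`) (map_prod g g)) (faces V E \<rho>)"
  proof (rule inj_onI)
    fix F G assume F: "F \<in> faces V E \<rho>" and G: "G \<in> faces V E \<rho>"
      and eq: "map_prod g g ` F = map_prod g g ` G"
    show "F = G"
      using eq inj_on_image_eq_iff[OF bij_betw_imp_inj_on[OF bij_betw_map_prod_arcs]
          faces_subset_arcs[OF F] faces_subset_arcs[OF G]] by simp
  qed
  have "map_prod g g ` F \<in> faces V E \<rho>" if F: "F \<in> faces V E \<rho>" for F
  proof -
    obtain a where a: "a \<in> arcs V E" "F = face_orbit \<rho> a"
      using F unfolding faces_def by blast
    show ?thesis
      unfolding a(2) faces_def face_orbit_map_prod[OF a(1)] by (rule imageI[OF map_prod_arc[OF a(1)]])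
  qed
  then have "(`) (map_prod g g) ` faces V E \<rho> \<subseteq> faces V E \<rho>"
    by (rule image_subsetI)
  then have "(`) (map_prod g g) ` faces V E \<rho> = faces V E \<rho>"
    using finite_faces inj by (intro endo_inj_surj)
  with inj show ?thesis
    unfolding bij_betw_def ..
qed

end

end

section \<open>The vertex-face incidence graph\<close>

lemma vf_adj_cases:
  assumes "x \<in> Inl ` V \<union> Inr ` Fs" "y \<in> Inl ` V \<union> Inr ` Fs" "vf_adj x y"
  obtains v F where "{x, y} = {Inl v, Inr F}" "F \<in> Fs" "v \<in> face_vertices F"
  using assms by (cases x; cases y) (auto simp: insert_commute)

lemma bij_betw_map_sum:
  assumes "bij_betw f A A'" "bij_betw g B B'"
  shows "bij_betw (map_sum f g) (Inl ` A \<union> Inr ` B) (Inl ` A' \<union> Inr ` B')"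
  unfolding bij_betw_def
proof
  show "inj_on (map_sum f g) (Inl ` A \<union> Inr ` B)"
  proof (rule inj_onI)
    fix x y assume "x \<in> Inl ` A \<union> Inr ` B" "y \<in> Inl ` A \<union> Inr ` B" "map_sum f g x = map_sum f g y"
    then show "x = y"
      using inj_onD[OF bij_betw_imp_inj_on[OF assms(1)]] inj_onD[OF bij_betw_imp_inj_on[OF assms(2)]]
      by (elim UnE imageE) simp_all
  qed
  have "map_sum f g ` Inl ` A = Inl ` f ` A" "map_sum f g ` Inr ` B = Inr ` g ` B"
    by (simp_all add: image_image)
  then show "map_sum f g ` (Inl ` A \<union> Inr ` B) = Inl ` A' \<union> Inr ` B'"
    using assms unfolding bij_betw_def image_Un by simp
qed

lemma graph_aut_incidence:
  assumes "bij_betw f V V" "bij_betw h Fs Fs"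
    and "\<And>v F. v \<in> V \<Longrightarrow> F \<in> Fs \<Longrightarrow> f v \<in> face_vertices (h F) \<longleftrightarrow> v \<in> face_vertices F"
  shows "graph_aut (Inl ` V \<union> Inr ` Fs) vf_adj (map_sum f h)"
  unfolding graph_aut_def
proof (intro conjI ballI)
  show "bij_betw (map_sum f h) (Inl ` V \<union> Inr ` Fs) (Inl ` V \<union> Inr ` Fs)"
    using assms(1,2) by (rule bij_betw_map_sum)
  fix x y assume "x \<in> Inl ` V \<union> Inr ` Fs" "y \<in> Inl ` V \<union> Inr ` Fs"
  then show "vf_adj x y \<longleftrightarrow> vf_adj (map_sum f h x) (map_sum f h y)"
    by (elim UnE imageE) (simp_all add: assms(3))
qed

lemma edge_transitive_incidence:
  assumes "\<And>v F v' F'. F \<in> Fs \<Longrightarrow> v \<in> face_vertices F \<Longrightarrow> F' \<in> Fs \<Longrightarrow> v' \<in> face_vertices F' \<Longrightarrow>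
      \<exists>f h. graph_aut (Inl ` V \<union> Inr ` Fs) vf_adj (map_sum f h) \<and> f v = v' \<and> h F = F'"
  shows "edge_transitive (Inl ` V \<union> Inr ` Fs) vf_adj"
  unfolding edge_transitive_def
proof (intro ballI impI, elim conjE)
  fix x y x' y' assume W: "x \<in> Inl ` V \<union> Inr ` Fs" "y \<in> Inl ` V \<union> Inr ` Fs"
    "x' \<in> Inl ` V \<union> Inr ` Fs" "y' \<in> Inl ` V \<union> Inr ` Fs" and "vf_adj x y" "vf_adj x' y'"
  obtain v F where vF: "{x, y} = {Inl v, Inr F}" "F \<in> Fs" "v \<in> face_vertices F"
    using vf_adj_cases[OF W(1,2) \<open>vf_adj x y\<close>] .
  obtain v' F' where vF': "{x', y'} = {Inl v', Inr F'}" "F' \<in> Fs" "v' \<in> face_vertices F'"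
    using vf_adj_cases[OF W(3,4) \<open>vf_adj x' y'\<close>] .
  obtain f h where fh: "graph_aut (Inl ` V \<union> Inr ` Fs) vf_adj (map_sum f h)" "f v = v'" "h F = F'"
    using assms[OF vF(2,3) vF'(2,3)] by blast
  have "{map_sum f h x, map_sum f h y} = map_sum f h ` {Inl v, Inr F}"
    unfolding vF(1)[symmetric] by simp
  also have "\<dots> = {x', y'}"
    using fh(2,3) vF'(1) by simp
  finally show "\<exists>\<sigma>. graph_aut (Inl ` V \<union> Inr ` Fs) vf_adj \<sigma> \<and> {\<sigma> x, \<sigma> y} = {x', y'}"
    using fh(1) by blast
qed

context embedded_graph
begin

lemma or_aut_incidence_graph_aut:
  assumes aut: "or_aut V E \<rho> g"
  shows "graph_aut (vf_vertices V E \<rho>) vf_adj (map_sum g ((`) (map_prod g g)))"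
  unfolding vf_vertices_def
proof (rule graph_aut_incidence)
  show "bij_betw g V V"
    using aut unfolding or_aut_def by blast
  show "bij_betw ((`) (map_prod g g)) (faces V E \<rho>) (faces V E \<rho>)"
    using aut by (rule bij_betw_image_faces)
  fix v F assume "v \<in> V" "F \<in> faces V E \<rho>"
  then show "g v \<in> face_vertices (map_prod g g ` F) \<longleftrightarrow> v \<in> face_vertices F"
    unfolding face_vertices_map_prod
    using inj_on_image_mem_iff[OF or_aut_inj_on[OF aut] _ face_vertices_subset] by blast
qed

lemma orientably_regular_incidence_transitive:
  assumes reg: "orientably_regular V E \<rho>"
    and F: "F \<in> faces V E \<rho>" "v \<in> face_vertices F"
    and F': "F' \<in> faces V E \<rho>" "v' \<in> face_vertices F'"
  shows "\<exists>g. or_aut V E \<rho> g \<and> g v = v' \<and> map_prod g g ` F = F'"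
proof -
  obtain a where a: "a \<in> F" "v = fst a"
    using F(2) unfolding face_vertices_def by blast
  obtain a' where a': "a' \<in> F'" "v' = fst a'"
    using F'(2) unfolding face_vertices_def by blast
  have arcs: "a \<in> arcs V E" "a' \<in> arcs V E"
    using a(1) a'(1) F(1) F'(1) faces_subset_arcs by blast+
  obtain g where g: "or_aut V E \<rho> g" "map_prod g g a = a'"
    using reg arcs unfolding orientably_regular_def map_prod_def split_beta by blast
  have "map_prod g g ` F = F'"
    unfolding face_eq_face_orbit[OF F(1) a(1)] face_eq_face_orbit[OF F'(1) a'(1)]
      face_orbit_map_prod[OF g(1) arcs(1)] g(2) ..
  moreover have "g v = v'"
    using g(2) a(2) a'(2) by auto
  ultimately show ?thesis
    using g(1) by blast
qed

theorem incidence_graph_edge_transitive: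
  assumes "orientably_regular V E \<rho>"
  shows "edge_transitive (vf_vertices V E \<rho>) vf_adj"
  unfolding vf_vertices_def
proof (rule edge_transitive_incidence)
  fix v F v' F' assume "F \<in> faces V E \<rho>" "v \<in> face_vertices F" "F' \<in> faces V E \<rho>" "v' \<in> face_vertices F'"
  then obtain g where "or_aut V E \<rho> g" "g v = v'" "map_prod g g ` F = F'"
    using orientably_regular_incidence_transitive[OF assms] by blast
  then show "\<exists>f h. graph_aut (Inl ` V \<union> Inr ` faces V E \<rho>) vf_adj (map_sum f h) \<and> f v = v' \<and> h F = F'"
    using or_aut_incidence_graph_aut unfolding vf_vertices_def by blast
qed

section \<open>The \<open>H\<close>-digraph\<close>

lemma face_incidence_invariant:
  assumes aut: "or_aut V E \<rho> g" and x: "x \<in> arcs V E" and y: "y \<in> arcs V E"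
  shows "(\<Sum>F\<in>faces V E \<rho>. arc_face_inc (map_prod g g x) F * arc_face_inc (map_prod g g y) F)
       = (\<Sum>F\<in>faces V E \<rho>. arc_face_inc x F * arc_face_inc y F)"
    (is "?lhs = _")
proof -
  have "?lhs = (\<Sum>F\<in>faces V E \<rho>.
      arc_face_inc (map_prod g g x) (map_prod g g ` F) * arc_face_inc (map_prod g g y) (map_prod g g ` F))"
    by (rule sum.reindex_bij_betw[OF bij_betw_image_faces[OF aut], symmetric])
  also have "\<dots> = (\<Sum>F\<in>faces V E \<rho>. arc_face_inc x F * arc_face_inc y F)"
  proof (rule sum.cong)
    fix F assume F: "F \<in> faces V E \<rho>"
    have "map_prod g g z \<in> map_prod g g ` F \<longleftrightarrow> z \<in> F" if "z \<in> arcs V E" for z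
      by (rule inj_on_image_mem_iff[OF bij_betw_imp_inj_on[OF bij_betw_map_prod_arcs[OF aut]] that
          faces_subset_arcs[OF F]])
    then show "arc_face_inc (map_prod g g x) (map_prod g g ` F) * arc_face_inc (map_prod g g y) (map_prod g g ` F)
        = arc_face_inc x F * arc_face_inc y F"
      unfolding arc_face_inc_def using x y by simp
  qed simp
  finally show ?thesis .
qed

lemma tail_incidence_invariant:
  assumes aut: "or_aut V E \<rho> g" and x: "x \<in> arcs V E" and y: "y \<in> arcs V E"
  shows "(\<Sum>v\<in>V. arc_tail_inc (map_prod g g x) v * arc_tail_inc (map_prod g g y) v)
       = (\<Sum>v\<in>V. arc_tail_inc x v * arc_tail_inc y v)"
    (is "?lhs = _")
proof -
  have "bij_betw g V V"
    using aut unfolding or_aut_def by blast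
  then have "?lhs = (\<Sum>v\<in>V. arc_tail_inc (map_prod g g x) (g v) * arc_tail_inc (map_prod g g y) (g v))"
    by (rule sum.reindex_bij_betw[symmetric])
  also have "\<dots> = (\<Sum>v\<in>V. arc_tail_inc x v * arc_tail_inc y v)"
  proof (rule sum.cong)
    fix v assume "v \<in> V"
    then have "g (fst x) = g v \<longleftrightarrow> fst x = v" "g (fst y) = g v \<longleftrightarrow> fst y = v"
      using inj_on_eq_iff[OF or_aut_inj_on[OF aut]] arc_vertices[OF x] arc_vertices[OF y] by simp_all
    then show "arc_tail_inc (map_prod g g x) (g v) * arc_tail_inc (map_prod g g y) (g v)
        = arc_tail_inc x v * arc_tail_inc y v"
      unfolding arc_tail_inc_def by (simp add: map_prod_def split_beta)
  qed simp
  finally show ?thesis .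
qed

lemma transition_matrix_invariant:
  assumes aut: "or_aut V E \<rho> g"
  shows "mat_eq (arcs V E) (permute_mat (map_prod g g) (transition_matrix V E \<rho> k d))
           (transition_matrix V E \<rho> k d)"
  unfolding transition_matrix_def
proof (rule mat_eq_permute_mmult[OF bij_betw_map_prod_arcs[OF aut]])
  note mid = mid_permute[OF bij_betw_imp_inj_on[OF bij_betw_map_prod_arcs[OF aut]]]
  show "mat_eq (arcs V E) (permute_mat (map_prod g g) (\<lambda>a b. complex_of_real (2 / real k *
      (\<Sum>F\<in>faces V E \<rho>. arc_face_inc a F * arc_face_inc b F)) - mid a b))
    (\<lambda>a b. complex_of_real (2 / real k * (\<Sum>F\<in>faces V E \<rho>. arc_face_inc a F * arc_face_inc b F)) - mid a b)"
    unfolding mat_eq_def permute_mat_def by (simp add: face_incidence_invariant[OF aut] mid)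
  show "mat_eq (arcs V E) (permute_mat (map_prod g g) (\<lambda>a b. complex_of_real (2 / real d *
      (\<Sum>v\<in>V. arc_tail_inc a v * arc_tail_inc b v)) - mid a b))
    (\<lambda>a b. complex_of_real (2 / real d * (\<Sum>v\<in>V. arc_tail_inc a v * arc_tail_inc b v)) - mid a b)"
    unfolding mat_eq_def permute_mat_def by (simp add: tail_incidence_invariant[OF aut] mid)
qed

theorem H_digraph_vertex_transitive:
  assumes reg: "orientably_regular V E \<rho>"
    and H: "principal_hamiltonian (arcs V E)
      (mmult (arcs V E) (transition_matrix V E \<rho> k d) (transition_matrix V E \<rho> k d)) H"
  shows "weighted_vertex_transitive (arcs V E) H"
  unfolding weighted_vertex_transitive_def
proof (intro ballI)
  fix a b assume "a \<in> arcs V E" "b \<in> arcs V E"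
  then obtain g where aut: "or_aut V E \<rho> g" and ab: "map_prod g g a = b"
    using reg unfolding orientably_regular_def map_prod_def split_beta by blast
  note \<sigma> = bij_betw_map_prod_arcs[OF aut]
  have "weighted_digraph_aut (arcs V E) H (map_prod g g)"
    using H finite_arcs \<sigma>
    by (rule principal_hamiltonian_aut)
      (intro mat_eq_permute_mmult[OF \<sigma>] transition_matrix_invariant[OF aut])
  with ab show "\<exists>\<sigma>. weighted_digraph_aut (arcs V E) H \<sigma> \<and> \<sigma> a = b"
    by blast
qed

end

theorem theorem5p1:
  fixes V :: "'v set" and E :: "'v \<Rightarrow> 'v \<Rightarrow> bool" and \<rho> :: "'v \<Rightarrow> 'v \<Rightarrow> 'v"
    and k d :: nat
  assumes "simple_graph V E" and "connected_graph V E"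
    and "rotation_system V E \<rho>"
    and "circular V E \<rho>" and "has_type V E \<rho> k d"
    and "orientably_regular V E \<rho>"
  shows "edge_transitive (vf_vertices V E \<rho>) vf_adj
         \<and> (\<forall>H. principal_hamiltonian (arcs V E)
              (mmult (arcs V E) (transition_matrix V E \<rho> k d) (transition_matrix V E \<rho> k d)) H
            \<longrightarrow> weighted_vertex_transitive (arcs V E) H)"
proof -
  interpret embedded_graph V E \<rho>
    using assms(1,3) by unfold_locales
  show ?thesis
    using incidence_graph_edge_transitive[OF assms(6)] H_digraph_vertex_transitive[OF assms(6)] by blast
qed

end
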